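(* For every graph $G=(V,E)$ with at least one edge, $av_1(G)\ge 2$. Equality holds if and only if $N(u)\cup N(v)=V$ for every edge $uv\in E$. In particular, for $n\ge 2$ the star $S_n$ is the unique $n$-vertex tree minimising $av_1$, and it is one of the $n$-vertex graphs with at least one edge minimising $av_1$.
   Context: All graphs are finite and simple. For a graph $G=(V,E)$, a set $S\subseteq V$ is a $1$-nearly independent vertex set if the subgraph induced by $S$ has exactly one edge. $\sigma_1(G)$ is the number of such sets, $S_1(G)$ the sum of their sizes, and $av_1(G)=S_1(G)/\sigma_1(G)$. $N(v)$ is the set of neighbours of $v$. $S_n$ is the star on $n$ vertices. *)

theory Defs
  imports Main Complex_Main
begin

definition graph :: "'a set \<Rightarrow> 'a set set \<Rightarrow> bool" where
  "graph V E \<longleftrightarrow> finite V \<and> (\<forall>e\<in>E. e \<subseteq> V \<and> card e = 2)"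

definition nbrs :: "'a set set \<Rightarrow> 'a \<Rightarrow> 'a set" where
  "nbrs E v = {u. {u, v} \<in> E}"

definition nearly_indep1 :: "'a set \<Rightarrow> 'a set set \<Rightarrow> 'a set \<Rightarrow> bool" where
  "nearly_indep1 V E S \<longleftrightarrow> S \<subseteq> V \<and> card {e\<in>E. e \<subseteq> S} = 1"

definition sigma1 :: "'a set \<Rightarrow> 'a set set \<Rightarrow> nat" where
  "sigma1 V E = card {S. nearly_indep1 V E S}"

definition S1 :: "'a set \<Rightarrow> 'a set set \<Rightarrow> nat" where
  "S1 V E = (\<Sum>S\<in>{S. nearly_indep1 V E S}. card S)"

definition av1 :: "'a set \<Rightarrow> 'a set set \<Rightarrow> real" where
  "av1 V E = real (S1 V E) / real (sigma1 V E)"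

definition connected_graph :: "'a set \<Rightarrow> 'a set set \<Rightarrow> bool" where
  "connected_graph V E \<longleftrightarrow>
     (\<forall>u\<in>V. \<forall>v\<in>V. (u, v) \<in> {(x, y). {x, y} \<in> E}\<^sup>*)"

definition has_cycle :: "'a set \<Rightarrow> 'a set set \<Rightarrow> bool" where
  "has_cycle V E \<longleftrightarrow> (\<exists>vs. length vs \<ge> 3 \<and> distinct vs \<and> set vs \<subseteq> V \<and>
     (\<forall>i. i + 1 < length vs \<longrightarrow> {vs ! i, vs ! (i + 1)} \<in> E) \<and> {last vs, hd vs} \<in> E)"

definition is_tree :: "'a set \<Rightarrow> 'a set set \<Rightarrow> bool" where
  "is_tree V E \<longleftrightarrow> graph V E \<and> V \<noteq> {} \<and> connected_graph V E \<and> \<not> has_cycle V E"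

definition star_V :: "nat \<Rightarrow> nat set" where
  "star_V n = {0..<n}"

definition star_E :: "nat \<Rightarrow> nat set set" where
  "star_E n = {{0, i} | i. i \<in> {1..<n}}"

definition is_star :: "'a set \<Rightarrow> 'a set set \<Rightarrow> bool" where
  "is_star V E \<longleftrightarrow> (\<exists>c\<in>V. E = {{c, v} | v. v \<in> V - {c}})"

end

theory Submission
  imports Defs
begin

text \<open>
Every 1-nearly independent set contains its unique edge, so it has at least two vertices, and
the edges themselves are such sets; hence \<open>av\<^sub>1 \<ge> 2\<close>, with equality iff every 1-nearly
independent set is an edge. A larger one exists iff some edge \<open>uv\<close> has a vertex \<open>x\<close> adjacent
to neither end, because then \<open>{u,v,x}\<close> is one. In an acyclic graph in which every edge
dominates, an end of any edge \<open>ab\<close> is adjacent to all other vertices: otherwise there are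
\<open>w \<notin> N(a)\<close> and \<open>x \<notin> N(b)\<close>, and domination yields the 4-cycle \<open>a b w x\<close>. So the star is the
unique tree with \<open>av\<^sub>1 = 2\<close>.
\<close>

lemma mean_ge_lower_bound:
  fixes f :: "'b \<Rightarrow> nat"
  assumes "finite F" "F \<noteq> {}" "\<forall>x\<in>F. k \<le> f x"
  shows "real k \<le> real (\<Sum>x\<in>F. f x) / real (card F)"
    and "real (\<Sum>x\<in>F. f x) / real (card F) = real k \<longleftrightarrow> (\<forall>x\<in>F. f x = k)"
proof -
  have card_pos: "real (card F) > 0"
    using assms(1,2) by (simp add: card_gt_0_iff)
  have sum_ge: "card F * k \<le> (\<Sum>x\<in>F. f x)"
    using sum_mono[of F "\<lambda>_. k" f] assms(3) by simp
  have sum_eq_iff: "(\<Sum>x\<in>F. f x) = card F * k \<longleftrightarrow> (\<forall>x\<in>F. f x = k)"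
  proof
    assume eq: "(\<Sum>x\<in>F. f x) = card F * k"
    show "\<forall>x\<in>F. f x = k"
    proof (rule ccontr)
      assume "\<not> (\<forall>x\<in>F. f x = k)"
      then obtain y where "y \<in> F" "k < f y"
        using assms(3) by force
      then have "(\<Sum>x\<in>F. k) < (\<Sum>x\<in>F. f x)"
        using assms(1,3) by (intro sum_strict_mono_ex1) auto
      with eq show False by simp
    qed
  qed simp
  have "real (card F) * real k \<le> real (\<Sum>x\<in>F. f x)"
    using sum_ge by (metis of_nat_le_iff of_nat_mult)
  then show "real k \<le> real (\<Sum>x\<in>F. f x) / real (card F)"
    using card_pos by (simp add: pos_le_divide_eq mult.commute del: of_nat_sum)
  have "real (\<Sum>x\<in>F. f x) / real (card F) = real k \<longleftrightarrow>
      real (\<Sum>x\<in>F. f x) = real (card F * k)"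
    using card_pos by (simp add: divide_eq_eq mult.commute del: of_nat_sum)
  with sum_eq_iff show "real (\<Sum>x\<in>F. f x) / real (card F) = real k \<longleftrightarrow> (\<forall>x\<in>F. f x = k)"
    by (simp only: of_nat_eq_iff)
qed

lemma graph_edgeE:
  assumes "graph V E" "e \<in> E"
  obtains u v where "e = {u, v}" "u \<noteq> v" "u \<in> V" "v \<in> V"
  using assms unfolding graph_def by (metis card_2_iff insert_subset)

lemma nearly_indep1_edge:
  assumes "graph V E" "e \<in> E"
  shows "nearly_indep1 V E e"
proof -
  have "e \<subseteq> V" "card e = 2"
    using assms by (auto simp: graph_def)
  then have "finite e"
    by (intro card_ge_0_finite) simp
  have "e' = e" if "e' \<in> E" "e' \<subseteq> e" for e'
  proof (rule card_subset_eq[OF \<open>finite e\<close> \<open>e' \<subseteq> e\<close>])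
    show "card e' = card e"
      using assms(1) \<open>e' \<in> E\<close> \<open>card e = 2\<close> by (simp add: graph_def)
  qed
  then have "{e' \<in> E. e' \<subseteq> e} = {e}"
    using assms(2) by blast
  with \<open>e \<subseteq> V\<close> show ?thesis
    by (simp add: nearly_indep1_def)
qed

lemma nearly_indep1_edgeE:
  assumes "nearly_indep1 V E S"
  obtains e where "e \<in> E" "e \<subseteq> S" "\<And>e'. e' \<in> E \<Longrightarrow> e' \<subseteq> S \<Longrightarrow> e' = e"
proof -
  have "card {e \<in> E. e \<subseteq> S} = 1"
    using assms by (simp add: nearly_indep1_def)
  then obtain e where "{e' \<in> E. e' \<subseteq> S} = {e}"
    by (rule card_1_singletonE)
  then show thesis
    by (intro that[of e]) blast+
qed

lemma nearly_indep1_card_ge_2: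
  assumes "graph V E" "nearly_indep1 V E S"
  shows "2 \<le> card S"
proof -
  obtain e where "e \<in> E" "e \<subseteq> S"
    using assms(2) by (rule nearly_indep1_edgeE)
  have "finite S"
    using assms by (auto simp: graph_def nearly_indep1_def intro: finite_subset)
  then have "card e \<le> card S"
    using \<open>e \<subseteq> S\<close> by (rule card_mono)
  moreover have "card e = 2"
    using assms(1) \<open>e \<in> E\<close> by (simp add: graph_def)
  ultimately show ?thesis
    by simp
qed

lemma nearly_indep1_add_undominated:
  assumes "graph V E" "{u, v} \<in> E" "x \<in> V" "x \<notin> nbrs E u \<union> nbrs E v"
  shows "nearly_indep1 V E {u, v, x}" and "card {u, v, x} = 3"
proof -
  have "card {u, v} = 2" "u \<in> V" "v \<in> V"
    using assms(1,2) by (auto simp: graph_def)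
  have non_adj: "{x, u} \<notin> E" "{x, v} \<notin> E"
    using assms(4) by (auto simp: nbrs_def)
  have "x \<noteq> u"
    using non_adj(2) assms(2) by blast
  moreover have "x \<noteq> v"
    using non_adj(1) assms(2) by (metis insert_commute)
  ultimately show "card {u, v, x} = 3"
    using \<open>card {u, v} = 2\<close> by (auto simp: card_insert_if split: if_splits)
  have "e = {u, v}" if "e \<in> E" "e \<subseteq> {u, v, x}" for e
  proof -
    obtain a b where ab: "e = {a, b}" "a \<noteq> b"
      using assms(1) \<open>e \<in> E\<close> by (rule graph_edgeE)
    have "x \<notin> e"
    proof
      assume "x \<in> e"
      then obtain y where "e = {x, y}" "y \<noteq> x"
        using ab by (metis insert_commute insert_iff singletonD)
      moreover have "y \<in> {u, v}"
        using \<open>e \<subseteq> {u, v, x}\<close> calculation by auto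
      ultimately show False
        using non_adj \<open>e \<in> E\<close> by auto
    qed
    then have "e \<subseteq> {u, v}"
      using \<open>e \<subseteq> {u, v, x}\<close> by blast
    moreover have "card e = card {u, v}"
      using assms(1) \<open>e \<in> E\<close> \<open>card {u, v} = 2\<close> by (simp add: graph_def)
    ultimately show ?thesis
      by (intro card_subset_eq) auto
  qed
  then have "{e \<in> E. e \<subseteq> {u, v, x}} = {{u, v}}"
    using assms(2) by blast
  then show "nearly_indep1 V E {u, v, x}"
    using \<open>u \<in> V\<close> \<open>v \<in> V\<close> assms(3) by (simp add: nearly_indep1_def)
qed

lemma nearly_indep1_card_2_iff_dominating_edges:
  assumes "graph V E"
  shows "(\<forall>S. nearly_indep1 V E S \<longrightarrow> card S = 2) \<longleftrightarrow>
         (\<forall>u v. {u, v} \<in> E \<longrightarrow> nbrs E u \<union> nbrs E v = V)"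
proof
  assume "\<forall>S. nearly_indep1 V E S \<longrightarrow> card S = 2"
  then have "x \<in> nbrs E u \<union> nbrs E v" if "{u, v} \<in> E" "x \<in> V" for u v x
    using nearly_indep1_add_undominated[OF assms that] by fastforce
  moreover have "nbrs E w \<subseteq> V" for w
    using assms by (auto simp: nbrs_def graph_def)
  ultimately show "\<forall>u v. {u, v} \<in> E \<longrightarrow> nbrs E u \<union> nbrs E v = V"
    by blast
next
  assume dominating: "\<forall>u v. {u, v} \<in> E \<longrightarrow> nbrs E u \<union> nbrs E v = V"
  show "\<forall>S. nearly_indep1 V E S \<longrightarrow> card S = 2"
  proof (intro allI impI)
    fix S
    assume S: "nearly_indep1 V E S"
    then obtain e where e: "e \<in> E" "e \<subseteq> S"
      and unique: "\<And>e'. e' \<in> E \<Longrightarrow> e' \<subseteq> S \<Longrightarrow> e' = e"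
      by (metis nearly_indep1_edgeE)
    obtain u v where uv: "e = {u, v}" "u \<noteq> v"
      using assms e(1) by (rule graph_edgeE)
    have "S \<subseteq> {u, v}"
    proof
      fix x
      assume "x \<in> S"
      then have "x \<in> nbrs E u \<union> nbrs E v"
        using S dominating e(1) uv(1) by (auto simp: nearly_indep1_def)
      then have "{x, u} \<in> E \<or> {x, v} \<in> E"
        by (auto simp: nbrs_def)
      then show "x \<in> {u, v}"
        using unique \<open>x \<in> S\<close> e(2) uv by (auto simp: doubleton_eq_iff)
    qed
    then show "card S = 2"
      using e(2) uv by (metis card_2_iff subset_antisym)
  qed
qed

lemma av1_as_mean:
  assumes "graph V E" "E \<noteq> {}"
  shows "finite {S. nearly_indep1 V E S}" "{S. nearly_indep1 V E S} \<noteq> {}"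
    and "av1 V E = real (\<Sum>S\<in>{S. nearly_indep1 V E S}. card S) / real (card {S. nearly_indep1 V E S})"
proof -
  have "{S. nearly_indep1 V E S} \<subseteq> Pow V"
    by (auto simp: nearly_indep1_def)
  then show "finite {S. nearly_indep1 V E S}"
    using assms(1) by (auto simp: graph_def intro: finite_subset)
  show "{S. nearly_indep1 V E S} \<noteq> {}"
    using assms nearly_indep1_edge by blast
qed (simp add: av1_def S1_def sigma1_def)

theorem av1_ge_2:
  assumes "graph V E" "E \<noteq> {}"
  shows "2 \<le> av1 V E"
  using mean_ge_lower_bound(1)[OF av1_as_mean(1,2)[OF assms], of 2 card]
    nearly_indep1_card_ge_2[OF assms(1)] av1_as_mean(3)[OF assms] by simp

theorem av1_eq_2_iff_dominating_edges:
  assumes "graph V E" "E \<noteq> {}"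
  shows "av1 V E = 2 \<longleftrightarrow> (\<forall>u v. {u, v} \<in> E \<longrightarrow> nbrs E u \<union> nbrs E v = V)"
  using mean_ge_lower_bound(2)[OF av1_as_mean(1,2)[OF assms], of 2 card]
    nearly_indep1_card_ge_2[OF assms(1)] av1_as_mean(3)[OF assms]
    nearly_indep1_card_2_iff_dominating_edges[OF assms(1)] by simp

lemma has_cycle_triangle:
  assumes "{a, b} \<in> E" "{b, c} \<in> E" "{c, a} \<in> E" "distinct [a, b, c]" "{a, b, c} \<subseteq> V"
  shows "has_cycle V E"
  unfolding has_cycle_def
proof (intro exI[of _ "[a, b, c]"] conjI allI impI)
  fix i
  assume "i + 1 < length [a, b, c]"
  then have "i = 0 \<or> i = 1" by auto
  then show "{[a, b, c] ! i, [a, b, c] ! (i + 1)} \<in> E"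
    using assms by auto
qed (use assms in auto)

lemma has_cycle_square:
  assumes "{a, b} \<in> E" "{b, c} \<in> E" "{c, d} \<in> E" "{d, a} \<in> E" "distinct [a, b, c, d]"
    "{a, b, c, d} \<subseteq> V"
  shows "has_cycle V E"
  unfolding has_cycle_def
proof (intro exI[of _ "[a, b, c, d]"] conjI allI impI)
  fix i
  assume "i + 1 < length [a, b, c, d]"
  then have "i = 0 \<or> i = 1 \<or> i = 2" by auto
  then show "{[a, b, c, d] ! i, [a, b, c, d] ! (i + 1)} \<in> E"
    using assms by auto
qed (use assms in auto)

lemma not_has_cycle_if_common_vertex:
  assumes "\<forall>e\<in>E. c \<in> e"
  shows "\<not> has_cycle V E"
proof
  assume "has_cycle V E"
  then obtain vs where len: "length vs \<ge> 3" and "distinct vs"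
    and path: "\<And>i. i + 1 < length vs \<Longrightarrow> {vs ! i, vs ! (i + 1)} \<in> E"
    and closing: "{last vs, hd vs} \<in> E"
    unfolding has_cycle_def by blast
  have neq: "vs ! i \<noteq> vs ! j" if "i < length vs" "j < length vs" "i \<noteq> j" for i j
    using \<open>distinct vs\<close> that by (simp add: nth_eq_iff_index_eq)
  have "c \<in> {vs ! 0, vs ! 1}"
    using path[of 0] len by (intro bspec[OF assms]) simp
  moreover have "c \<in> {vs ! 1, vs ! 2}"
    using path[of 1] len by (intro bspec[OF assms]) (simp add: numeral_2_eq_2)
  moreover have "vs ! 0 \<noteq> vs ! 2"
    using len by (intro neq) auto
  ultimately have c: "vs ! 1 = c"
    by auto
  obtain j where j: "j < length vs" "j \<noteq> 1" "j \<noteq> 2" "{vs ! 2, vs ! j} \<in> E"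
  proof (cases "length vs = 3")
    case True
    then have "vs \<noteq> []"
      by auto
    then have "{vs ! 2, vs ! 0} \<in> E"
      using closing True by (simp add: last_conv_nth hd_conv_nth)
    then show ?thesis
      using True by (intro that[of 0]) simp_all
  next
    case False
    then have "{vs ! 2, vs ! 3} \<in> E"
      using path[of 2] len by simp
    then show ?thesis
      using False len by (intro that[of 3]) simp_all
  qed
  have "c \<in> {vs ! 2, vs ! j}"
    using j(4) by (rule bspec[OF assms])
  moreover have "vs ! 2 \<noteq> vs ! 1" "vs ! j \<noteq> vs ! 1"
    using len j(1,2) by (intro neq; simp)+
  ultimately show False
    using c by auto
qed

lemma connected_graph_if_universal_vertex:
  assumes "c \<in> V" "\<forall>v\<in>V - {c}. {c, v} \<in> E"
  shows "connected_graph V E"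
  unfolding connected_graph_def
proof (intro ballI)
  let ?R = "{(x, y). {x, y} \<in> E}"
  have to_c: "(v, c) \<in> ?R\<^sup>*" and from_c: "(c, v) \<in> ?R\<^sup>*" if "v \<in> V" for v
    using assms that by (cases "v = c"; force simp: insert_commute)+
  fix u v
  assume "u \<in> V" "v \<in> V"
  then show "(u, v) \<in> ?R\<^sup>*"
    using rtrancl_trans[OF to_c from_c] by blast
qed

lemma is_star_if_universal_vertex:
  assumes "graph V E" "\<not> has_cycle V E" "c \<in> V" "\<forall>v\<in>V - {c}. {c, v} \<in> E"
  shows "is_star V E"
  unfolding is_star_def
proof (intro bexI[OF _ \<open>c \<in> V\<close>] equalityI subsetI)
  fix e
  assume "e \<in> E"
  obtain p q where pq: "e = {p, q}" "p \<noteq> q" "p \<in> V" "q \<in> V"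
    using assms(1) \<open>e \<in> E\<close> by (rule graph_edgeE)
  have "c = p \<or> c = q"
  proof (rule ccontr)
    assume "\<not> (c = p \<or> c = q)"
    then have "has_cycle V E"
      using has_cycle_triangle[of p q E c V] assms(3,4) \<open>e \<in> E\<close> pq
      by (auto simp: insert_commute)
    with assms(2) show False ..
  qed
  then show "e \<in> {{c, v} | v. v \<in> V - {c}}"
    using pq by (auto simp: insert_commute)
qed (use assms(4) in auto)

lemma is_star_if_acyclic_dominating_edges:
  assumes "graph V E" "\<not> has_cycle V E" "E \<noteq> {}"
    and dominating: "\<forall>u v. {u, v} \<in> E \<longrightarrow> nbrs E u \<union> nbrs E v = V"
  shows "is_star V E"
proof -
  have adjacent: "{u, w} \<in> E \<or> {v, w} \<in> E" if "{u, v} \<in> E" "w \<in> V" for u v w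
    using dominating that by (auto simp: nbrs_def insert_commute)
  obtain a b where ab: "{a, b} \<in> E" "a \<noteq> b" "a \<in> V" "b \<in> V"
    using assms(1,3) graph_edgeE by (metis ex_in_conv)
  consider "\<forall>v\<in>V - {a}. {a, v} \<in> E" | "\<forall>v\<in>V - {b}. {b, v} \<in> E"
    | w x where "w \<in> V" "w \<noteq> a" "{a, w} \<notin> E" "x \<in> V" "x \<noteq> b" "{b, x} \<notin> E"
    by blast
  then show ?thesis
  proof cases
    case 1
    show ?thesis
      using assms(1,2) ab(3) 1 by (rule is_star_if_universal_vertex)
  next
    case 2
    show ?thesis
      using assms(1,2) ab(4) 2 by (rule is_star_if_universal_vertex)
  next
    case 3
    have "{b, w} \<in> E" "{a, x} \<in> E"
      using adjacent[OF ab(1) \<open>w \<in> V\<close>] adjacent[OF ab(1) \<open>x \<in> V\<close>] 3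
      by (auto simp: insert_commute)
    moreover from this have "{x, w} \<in> E"
      using adjacent[of x a w] 3 by (auto simp: insert_commute)
    moreover from calculation have "a \<noteq> x" "b \<noteq> w" "w \<noteq> x"
      using ab(1) 3 by (auto simp: insert_commute)
    ultimately have "has_cycle V E"
      using has_cycle_square[of a b E w x V] ab 3 by (auto simp: insert_commute)
    with assms(2) show ?thesis ..
  qed
qed

lemma is_tree_edges_nonempty:
  assumes "is_tree V E" "2 \<le> card V"
  shows "E \<noteq> {}"
proof -
  obtain u v where "u \<in> V" "v \<in> V" "u \<noteq> v"
    using assms(2) by (metis card_2_iff' obtain_subset_with_card_n subset_iff)
  then have "(u, v) \<in> {(x, y). {x, y} \<in> E}\<^sup>*"
    using assms(1) by (auto simp: is_tree_def connected_graph_def)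
  then obtain w where "(u, w) \<in> {(x, y). {x, y} \<in> E}"
    using \<open>u \<noteq> v\<close> by (cases rule: converse_rtranclE) auto
  then show ?thesis
    by auto
qed

lemma is_star_dominating_edges:
  assumes "is_star V E" "{u, v} \<in> E"
  shows "nbrs E u \<union> nbrs E v = V"
proof -
  obtain c where c: "c \<in> V" "E = {{c, w} | w. w \<in> V - {c}}"
    using assms(1) unfolding is_star_def by blast
  then have "nbrs E c = V - {c}"
    by (auto simp: nbrs_def doubleton_eq_iff)
  moreover have "c \<in> nbrs E w" if "w \<in> V - {c}" for w
    using c that by (auto simp: nbrs_def doubleton_eq_iff)
  moreover have "nbrs E w \<subseteq> V" for w
    using c by (auto simp: nbrs_def doubleton_eq_iff)
  moreover have "(u = c \<and> v \<in> V - {c}) \<or> (v = c \<and> u \<in> V - {c})"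
    using c assms(2) by (auto simp: doubleton_eq_iff)
  ultimately show ?thesis
    by auto
qed

lemma is_tree_if_is_star:
  assumes "finite V" "is_star V E"
  shows "is_tree V E"
proof -
  obtain c where c: "c \<in> V" "E = {{c, w} | w. w \<in> V - {c}}"
    using assms(2) unfolding is_star_def by blast
  then have "graph V E"
    using assms(1) by (auto simp: graph_def)
  moreover have "connected_graph V E"
    using c by (intro connected_graph_if_universal_vertex) auto
  moreover have "\<not> has_cycle V E"
    using c by (intro not_has_cycle_if_common_vertex) auto
  ultimately show ?thesis
    using c(1) by (auto simp: is_tree_def)
qed

lemma is_star_star:
  assumes "1 \<le> n"
  shows "is_star (star_V n) (star_E n)"
proof -
  have "{0..<n} - {0} = {1..<n}"
    by auto
  then show ?thesis
    using assms unfolding is_star_def star_V_def star_E_def by force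
qed

lemma av1_star:
  assumes "2 \<le> n"
  shows "av1 (star_V n) (star_E n) = 2"
proof -
  have star: "is_star (star_V n) (star_E n)"
    using assms by (intro is_star_star) simp
  then have "graph (star_V n) (star_E n)"
    using is_tree_if_is_star[of "star_V n"] by (simp add: is_tree_def star_V_def)
  moreover have "{0, 1} \<in> star_E n"
    using assms unfolding star_E_def by auto
  ultimately show ?thesis
    using is_star_dominating_edges[OF star]
    by (subst av1_eq_2_iff_dominating_edges) auto
qed

theorem mainTheorem7:
  shows "(\<forall>(V :: 'a set) E. graph V E \<and> E \<noteq> {} \<longrightarrow>
           av1 V E \<ge> 2 \<and>
           (av1 V E = 2 \<longleftrightarrow> (\<forall>u v. {u, v} \<in> E \<longrightarrow> nbrs E u \<union> nbrs E v = V))) \<and>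
         (\<forall>n \<ge> 2.
           is_tree (star_V n) (star_E n) \<and>
           (\<forall>(V :: 'a set) E. is_tree V E \<and> card V = n \<longrightarrow>
              av1 (star_V n) (star_E n) \<le> av1 V E \<and>
              (av1 V E = av1 (star_V n) (star_E n) \<longrightarrow> is_star V E)) \<and>
           (\<forall>(V :: 'a set) E. graph V E \<and> card V = n \<and> E \<noteq> {} \<longrightarrow>
              av1 (star_V n) (star_E n) \<le> av1 V E))"
proof (intro conjI allI impI)
  fix V :: "'a set" and E
  assume "graph V E \<and> E \<noteq> {}"
  then show "2 \<le> av1 V E"
    and "av1 V E = 2 \<longleftrightarrow> (\<forall>u v. {u, v} \<in> E \<longrightarrow> nbrs E u \<union> nbrs E v = V)"
    using av1_ge_2 av1_eq_2_iff_dominating_edges by blast+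
next
  fix n :: nat
  assume "2 \<le> n"
  then show "is_tree (star_V n) (star_E n)"
    by (intro is_tree_if_is_star is_star_star) (auto simp: star_V_def)
next
  fix n :: nat and V :: "'a set" and E
  assume n: "2 \<le> n" and "graph V E \<and> card V = n \<and> E \<noteq> {}"
  then show "av1 (star_V n) (star_E n) \<le> av1 V E"
    using av1_star av1_ge_2 by auto
next
  fix n :: nat and V :: "'a set" and E
  assume n: "2 \<le> n" and tree: "is_tree V E \<and> card V = n"
  then have "graph V E" "\<not> has_cycle V E" "E \<noteq> {}"
    using is_tree_edges_nonempty by (auto simp: is_tree_def)
  then show "av1 (star_V n) (star_E n) \<le> av1 V E"
    using av1_star[OF n] av1_ge_2 by simp
  assume "av1 V E = av1 (star_V n) (star_E n)"
  then show "is_star V E"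
    using \<open>graph V E\<close> \<open>\<not> has_cycle V E\<close> \<open>E \<noteq> {}\<close> av1_star[OF n]
    by (simp add: av1_eq_2_iff_dominating_edges is_star_if_acyclic_dominating_edges)
qed

end
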